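(* Let $\mathcal{D}$ be a set, $\Sigma$ a finite set, $R\subseteq\mathcal{D}^\Sigma$ and $k\ge0$ an integer. Then $R$ admits a $k$-key if and only if $|R|\le|\mathcal{D}|^k$ (cardinal arithmetic when $\mathcal{D}$ is infinite).
   Context: For $R\subseteq\mathcal{D}^\Sigma$ and $\Lambda\subseteq\Sigma$, $\pi_\Lambda R=\{a|_\Lambda:a\in R\}$. For a relation $S\subseteq\mathcal{D}^{\Omega}$, a proper subset $\textup{K}\subset\Omega$ is a $k$-key of $S$ if $|\textup{K}|=k$ and for all $a,b\in S$, $a|_{\textup{K}}=b|_{\textup{K}}$ implies $a=b$. $R\subseteq\mathcal{D}^\Sigma$ admits a $k$-key if there exist a finite set $\textup{T}$ with $\textup{T}\cap\Sigma=\emptyset$ and $\widehat R\subseteq\mathcal{D}^{\textup{T}\cup\Sigma}$ having a $k$-key such that $R=\pi_\Sigma\widehat R$. *)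

theory Defs
  imports Main "HOL-Library.FuncSet" "HOL-Library.Equipollence"
begin

text \<open>Tuples over a finite attribute set Omega with values in D are the
  extensional functions in PiE Omega (\<lambda>_. D), i.e. elements of D^Omega.\<close>

definition proj :: "'v set \<Rightarrow> ('v \<Rightarrow> 'd) set \<Rightarrow> ('v \<Rightarrow> 'd) set" where
  "proj L R = (\<lambda>a. restrict a L) ` R"

definition is_key :: "nat \<Rightarrow> 'v set \<Rightarrow> 'v set \<Rightarrow> ('v \<Rightarrow> 'd) set \<Rightarrow> bool" where
  "is_key k K Omega S \<longleftrightarrow> K \<subset> Omega \<and> card K = k \<and>
     (\<forall>a\<in>S. \<forall>b\<in>S. restrict a K = restrict b K \<longrightarrow> a = b)"

definition has_key :: "nat \<Rightarrow> 'v set \<Rightarrow> ('v \<Rightarrow> 'd) set \<Rightarrow> bool" where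
  "has_key k Omega S \<longleftrightarrow> (\<exists>K. is_key k K Omega S)"

text \<open>R \<subseteq> D^Sg admits a k-key: there is a finite set T of fresh attributes
  (tagged Inr, hence disjoint from the attributes Inl ` Sg) and a relation
  Rhat \<subseteq> D^(T \<union> Sg) having a k-key whose projection onto Sg is R.\<close>
definition admits_key :: "'d set \<Rightarrow> 'v set \<Rightarrow> nat \<Rightarrow> ('v \<Rightarrow> 'd) set \<Rightarrow> bool" where
  "admits_key D Sg k R \<longleftrightarrow>
     (\<exists>(T :: nat set) (Rhat :: ('v + nat \<Rightarrow> 'd) set).
        finite T \<and>
        Rhat \<subseteq> PiE (Inr ` T \<union> Inl ` Sg) (\<lambda>_. D) \<and>
        has_key k (Inr ` T \<union> Inl ` Sg) Rhat \<and>
        R = (\<lambda>a. restrict (a \<circ> Inl) Sg) ` Rhat)"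

end

theory Submission
  imports Defs
begin

text \<open>A k-key K of Rhat makes restriction to K injective on Rhat, so Rhat, and with it its
  projection R, is no larger than D^K, which is equipollent to D^k. Conversely, an injection
  f of R into D^k is stored in k fresh columns, which then form a key; one further dummy column
  keeps the key a proper subset of the attributes even when Sg is empty.\<close>

lemma is_key_lepoll_PiE:
  assumes "is_key k K Omega S" and "S \<subseteq> PiE Omega (\<lambda>_. D)"
  shows "S \<lesssim> PiE K (\<lambda>_. D)"
  unfolding lepoll_def
proof (intro exI conjI)
  show "inj_on (\<lambda>a. restrict a K) S"
    using assms(1) unfolding is_key_def inj_on_def by blast
  have "K \<subseteq> Omega"
    using assms(1) unfolding is_key_def by blast
  then show "(\<lambda>a. restrict a K) ` S \<subseteq> PiE K (\<lambda>_. D)"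
    using assms(2) by (fastforce simp: PiE_iff)
qed

lemma has_key_lepoll_PiE_lessThan:
  assumes "has_key k Omega S" and "finite Omega" and "S \<subseteq> PiE Omega (\<lambda>_. D)" and "D \<noteq> {}"
  shows "S \<lesssim> PiE {..<k} (\<lambda>_. D)"
proof -
  obtain K where K: "is_key k K Omega S"
    using assms(1) unfolding has_key_def by blast
  have "finite K" and "card K = k"
    using K assms(2) unfolding is_key_def by (auto intro: finite_subset)
  then have "K \<approx> {..<k}"
    by (simp add: eqpoll_iff_finite_card)
  have "S \<lesssim> PiE K (\<lambda>_. D)"
    using K assms(3) by (rule is_key_lepoll_PiE)
  also have "\<dots> \<lesssim> PiE {..<k} (\<lambda>_. D)"
    using assms(4) \<open>K \<approx> {..<k}\<close> by (simp add: lepoll_funcset_left eqpoll_imp_lepoll)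
  finally show ?thesis .
qed

definition join_tuple :: "'v set \<Rightarrow> nat set \<Rightarrow> ('v \<Rightarrow> 'd) \<Rightarrow> (nat \<Rightarrow> 'd) \<Rightarrow> ('v + nat \<Rightarrow> 'd)" where
  "join_tuple Sg T a b = restrict (case_sum a b) (Inr ` T \<union> Inl ` Sg)"

lemma join_tuple_in_PiE:
  "a \<in> PiE Sg (\<lambda>_. D) \<Longrightarrow> b \<in> PiE T (\<lambda>_. D) \<Longrightarrow>
    join_tuple Sg T a b \<in> PiE (Inr ` T \<union> Inl ` Sg) (\<lambda>_. D)"
  unfolding join_tuple_def by auto

lemma restrict_join_tuple_Inl: "a \<in> extensional Sg \<Longrightarrow> restrict (join_tuple Sg T a b \<circ> Inl) Sg = a"
  unfolding join_tuple_def by (auto simp: fun_eq_iff extensional_def)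

lemma restrict_join_tuple_Inr_eqD:
  assumes "K \<subseteq> T"
    and "restrict (join_tuple Sg T a b) (Inr ` K) = restrict (join_tuple Sg T a' b') (Inr ` K)"
  shows "restrict b K = restrict b' K"
proof
  fix i
  show "restrict b K i = restrict b' K i"
  proof (cases "i \<in> K")
    case True
    then show ?thesis
      using assms(1) fun_cong[OF assms(2), of "Inr i"] unfolding join_tuple_def by auto
  qed simp
qed

lemma admits_keyI:
  fixes T :: "nat set"
  assumes "finite T" and "R \<subseteq> PiE Sg (\<lambda>_. D)" and "\<And>a. a \<in> R \<Longrightarrow> g a \<in> PiE T (\<lambda>_. D)"
    and "K \<subset> T" and "card K = k" and "inj_on (\<lambda>a. restrict (g a) K) R"
  shows "admits_key D Sg k R"
proof -
  define Rhat where "Rhat = (\<lambda>a. join_tuple Sg T a (g a)) ` R"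
  have "Rhat \<subseteq> PiE (Inr ` T \<union> Inl ` Sg) (\<lambda>_. D)"
    using assms(2,3) unfolding Rhat_def by (intro image_subsetI join_tuple_in_PiE) auto
  moreover have "is_key k (Inr ` K) (Inr ` T \<union> Inl ` Sg) Rhat"
    unfolding is_key_def
  proof (intro conjI ballI impI)
    show "Inr ` K \<subset> Inr ` T \<union> Inl ` Sg"
      using assms(4) by auto
    show "card (Inr ` K) = k"
      using assms(5) by (simp add: card_image)
    fix x y assume "x \<in> Rhat" "y \<in> Rhat" and xy: "restrict x (Inr ` K) = restrict y (Inr ` K)"
    then obtain a b where "a \<in> R" "b \<in> R"
      and x: "x = join_tuple Sg T a (g a)" and y: "y = join_tuple Sg T b (g b)"
      unfolding Rhat_def by blast
    moreover have "restrict (g a) K = restrict (g b) K"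
      using assms(4) xy unfolding x y by (blast intro: restrict_join_tuple_Inr_eqD)
    ultimately show "x = y"
      using assms(6) unfolding inj_on_def by blast
  qed
  moreover have "R = (\<lambda>x. restrict (x \<circ> Inl) Sg) ` Rhat"
    using assms(2) unfolding Rhat_def image_image
    by (auto simp: restrict_join_tuple_Inl PiE_iff subset_iff intro!: image_eqI)
  ultimately show ?thesis
    unfolding admits_key_def has_key_def using assms(1) by blast
qed

theorem lemma20:
  fixes D :: "'d set" and Sg :: "'v set" and R :: "('v \<Rightarrow> 'd) set" and k :: nat
  assumes "D \<noteq> {}"
    and "finite Sg"
    and "R \<subseteq> PiE Sg (\<lambda>_. D)"
  shows "admits_key D Sg k R \<longleftrightarrow> R \<lesssim> PiE {..<k} (\<lambda>_. D)"
proof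
  assume "admits_key D Sg k R"
  then obtain T :: "nat set" and Rhat where "finite T"
    and Rhat: "Rhat \<subseteq> PiE (Inr ` T \<union> Inl ` Sg) (\<lambda>_. D)"
    and key: "has_key k (Inr ` T \<union> Inl ` Sg) Rhat"
    and R: "R = (\<lambda>a. restrict (a \<circ> Inl) Sg) ` Rhat"
    unfolding admits_key_def by blast
  have "R \<lesssim> Rhat"
    unfolding R by (rule image_lepoll)
  also have "Rhat \<lesssim> PiE {..<k} (\<lambda>_. D)"
    using key \<open>finite T\<close> assms(1,2) Rhat by (simp add: has_key_lepoll_PiE_lessThan)
  finally show "R \<lesssim> PiE {..<k} (\<lambda>_. D)" .
next
  assume "R \<lesssim> PiE {..<k} (\<lambda>_. D)"
  then obtain f where f: "inj_on f R" "f ` R \<subseteq> PiE {..<k} (\<lambda>_. D)"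
    unfolding lepoll_def by blast
  obtain d where "d \<in> D"
    using assms(1) by blast
  show "admits_key D Sg k R"
  proof (rule admits_keyI[where g = "\<lambda>a. (f a)(k := d)" and T = "{..k}" and K = "{..<k}"])
    show "(f a)(k := d) \<in> PiE {..k} (\<lambda>_. D)" if "a \<in> R" for a
      using that f(2) \<open>d \<in> D\<close> by (force simp: PiE_iff extensional_def)
    have "restrict ((f a)(k := d)) {..<k} = f a" if "a \<in> R" for a
      using that f(2) by (fastforce simp: fun_eq_iff PiE_iff extensional_def)
    then show "inj_on (\<lambda>a. restrict ((f a)(k := d)) {..<k}) R"
      using f(1) unfolding inj_on_def by simp
  qed (use assms(3) in auto)
qed

end
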